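(* Let $n\geq1$, $N=n+1$, and let $x\in CF(N)$ satisfy $\pi(x)\in\mathrm{Ker}(\partial_n)$. Then $x$ can be written uniquely as $$x=\big[(1,1,u)+(-1,-1,u)+(-1,1,v)+(1,-1,v)+(1,1,w)+(-1,1,w)\big]+(1,1,t)$$ with $u,v,w\in CF(n)$ and $t\in\mathrm{Ker}(\partial_n)$. Moreover, $\partial_N(x)=0$ if and only if $$\partial_nv=w+t+\eta_n w,\qquad \partial_nu=w+\eta_n t+\eta_n w,\qquad \partial_nw=0.$$
   Context: For $m\geq1$, $CF(m)$ is the $\mathbb{Z}_2$-vector space with basis the tuples $(\epsilon_1,\dots,\epsilon_{2m-1})\in\{\pm1\}^{2m-1}$. Linear maps $\eta_m,\tilde\partial_m:CF(m)\to CF(m)$ are given on basis elements by $\eta_m(\epsilon_1,\dots,\epsilon_{2m-1})=(-\epsilon_1,\dots,-\epsilon_{2m-1})$ and $\tilde\partial_m(\epsilon_1,\dots,\epsilon_{2m-1})=\sum_{i=1}^{2m-1}(\epsilon_1,\dots,-\epsilon_i,\dots,\epsilon_{2m-1})$, and $\partial_m=\tilde\partial_m+\eta_m$. $\pi:CF(N)\to CF(n)$ removes the first two coordinates of a basis tuple, extended linearly. For $a,b\in\{\pm1\}$ and $y\in CF(n)$, $(a,b,y)\in CF(N)$ denotes the element obtained by prefixing $(a,b)$ to every basis tuple in $y$, extended linearly (e.g. $(a,b,y_1+y_2)=(a,b,y_1)+(a,b,y_2)$). *)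

theory Defs
  imports Main
begin

text \<open>An element of the Z_2-vector space CF(m) is encoded as the (finite)
set of basis tuples having coefficient 1. Addition is symmetric difference.\<close>

definition cf_basis :: "nat \<Rightarrow> int list set" where
  "cf_basis m = {e. length e = 2*m - 1 \<and> set e \<subseteq> {1, -1}}"

definition CF :: "nat \<Rightarrow> int list set set" where
  "CF m = Pow (cf_basis m)"

definition cf_add :: "int list set \<Rightarrow> int list set \<Rightarrow> int list set" where
  "cf_add A B = (A - B) \<union> (B - A)"

text \<open>Z_2-linear extension of a map sending a basis tuple to a formal sum of basis
tuples (given as a list of summands): the coefficient of y in the image of A is the
parity of the total number of occurrences of y.\<close>

definition cf_lin :: "(int list \<Rightarrow> int list list) \<Rightarrow> int list set \<Rightarrow> int list set" where
  "cf_lin f A = {y. odd (\<Sum>e\<in>A. count_list (f e) y)}"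

definition cf_eta :: "int list set \<Rightarrow> int list set" where
  "cf_eta = cf_lin (\<lambda>e. [map uminus e])"

definition cf_dtilde :: "int list set \<Rightarrow> int list set" where
  "cf_dtilde = cf_lin (\<lambda>e. map (\<lambda>i. e[i := - (e ! i)]) [0..<length e])"

definition cf_d :: "int list set \<Rightarrow> int list set" where
  "cf_d A = cf_add (cf_dtilde A) (cf_eta A)"

definition cf_pi :: "int list set \<Rightarrow> int list set" where
  "cf_pi = cf_lin (\<lambda>e. [drop 2 e])"

definition cf_prefix :: "int \<Rightarrow> int \<Rightarrow> int list set \<Rightarrow> int list set" where
  "cf_prefix a b y = cf_lin (\<lambda>e. [a # b # e]) y"

definition cf_ker :: "nat \<Rightarrow> int list set set" where
  "cf_ker m = {t \<in> CF m. cf_d t = {}}"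

definition cf_decomp :: "int list set \<Rightarrow> int list set \<Rightarrow> int list set \<Rightarrow> int list set \<Rightarrow> int list set" where
  "cf_decomp u v w t =
     cf_add (cf_add (cf_add (cf_add (cf_add (cf_add
       (cf_prefix 1 1 u) (cf_prefix (-1) (-1) u))
       (cf_prefix (-1) 1 v)) (cf_prefix 1 (-1) v))
       (cf_prefix 1 1 w)) (cf_prefix (-1) 1 w))
       (cf_prefix 1 1 t)"

end

theory Submission
  imports Defs
begin

text \<open>Write x_ab for cf_slice a b x, the part of x whose basis tuples start with (a, b),
  and + and - for the signs 1 and -1. Then x is the sum of the (a, b, x_ab), and \<pi>(x) is
  the sum of the four slices. Comparing slices of a decomposition forces u = x_--, v = x_+-,
  w = x_-+ + x_+- and t = x_++ + u + w = \<pi>(x); this is existence and uniqueness. On slices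
  the differential acts by (\<partial>x)_ab = x_(-a)b + x_a(-b) + \<partial>~(x_ab) + \<eta>(x_(-a)(-b)), where
  \<partial>~ is cf_dtilde, so \<partial>x = 0 is a system of four linear equations in u, v, w, t. It reduces
  to the three stated ones because \<partial>~t = \<eta>t.\<close>

definition cf_slice :: "int \<Rightarrow> int \<Rightarrow> int list set \<Rightarrow> int list set" where
  "cf_slice a b X = {r. a # b # r \<in> X}"

lemma mem_cf_add [simp]: "z \<in> cf_add A B \<longleftrightarrow> (z \<in> A) \<noteq> (z \<in> B)"
  unfolding cf_add_def by auto

lemma finite_cf_add [simp]: "finite A \<Longrightarrow> finite B \<Longrightarrow> finite (cf_add A B)"
  unfolding cf_add_def by auto

lemma cf_lin_cf_add:
  assumes "finite A" "finite B"
  shows "cf_lin f (cf_add A B) = cf_add (cf_lin f A) (cf_lin f B)"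
proof (rule set_eqI)
  fix z
  let ?g = "\<lambda>e. count_list (f e) z"
  have "sum ?g (cf_add A B) = sum ?g (A - B) + sum ?g (B - A)"
    unfolding cf_add_def using assms by (intro sum.union_disjoint) auto
  moreover have "sum ?g A = sum ?g (A \<inter> B) + sum ?g (A - B)"
    by (rule sum.Int_Diff[OF assms(1)])
  moreover have "sum ?g B = sum ?g (A \<inter> B) + sum ?g (B - A)"
    by (subst Int_commute) (rule sum.Int_Diff[OF assms(2)])
  ultimately show "z \<in> cf_lin f (cf_add A B) \<longleftrightarrow> z \<in> cf_add (cf_lin f A) (cf_lin f B)"
    unfolding cf_lin_def by simp presburger
qed

lemma mem_cf_lin_single:
  assumes "finite A"
  shows "z \<in> cf_lin (\<lambda>e. [g e]) A \<longleftrightarrow> odd (card {e \<in> A. g e = z})"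
proof -
  have "(\<Sum>e\<in>A. count_list [g e] z) = (\<Sum>e\<in>A. of_bool (g e = z))"
    by (rule sum.cong) auto
  also have "\<dots> = card (A \<inter> {e. g e = z})"
    using assms by simp
  finally show ?thesis
    unfolding cf_lin_def by (simp add: Int_def)
qed

lemma mem_cf_lin_inj:
  assumes "finite A" "inj g"
  shows "z \<in> cf_lin (\<lambda>e. [g e]) A \<longleftrightarrow> (\<exists>e\<in>A. g e = z)"
proof (cases "\<exists>e\<in>A. g e = z")
  case True
  then obtain e where "e \<in> A" "g e = z" by blast
  then have "{e \<in> A. g e = z} = {e}"
    using assms(2) by (auto dest: injD)
  then show ?thesis
    using True assms(1) by (simp add: mem_cf_lin_single)
next
  case False
  then have "{e \<in> A. g e = z} = {}" by auto
  then show ?thesis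
    using False by (simp only: mem_cf_lin_single[OF assms(1)]) simp
qed

lemma mem_cf_eta: "finite A \<Longrightarrow> z \<in> cf_eta A \<longleftrightarrow> map uminus z \<in> A"
  unfolding cf_eta_def
  by (subst mem_cf_lin_inj) (auto intro: inj_mapI bexI[where x = "map uminus z"] simp: comp_def)

lemma mem_cf_prefix: "finite Y \<Longrightarrow> z \<in> cf_prefix a b Y \<longleftrightarrow> (\<exists>r\<in>Y. z = a # b # r)"
  unfolding cf_prefix_def by (subst mem_cf_lin_inj) (auto intro: injI)

lemma finite_cf_prefix [simp]:
  assumes "finite Y"
  shows "finite (cf_prefix a b Y)"
proof -
  have "cf_prefix a b Y = (\<lambda>r. a # b # r) ` Y"
    using assms by (auto simp: mem_cf_prefix)
  with assms show ?thesis
    by simp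
qed

lemma cf_pi_cf_prefix:
  assumes "finite Y"
  shows "cf_pi (cf_prefix a b Y) = Y"
proof (rule set_eqI)
  fix r
  have "{e \<in> cf_prefix a b Y. drop 2 e = r} = (if r \<in> Y then {a # b # r} else {})"
    using assms by (auto simp: mem_cf_prefix)
  then show "r \<in> cf_pi (cf_prefix a b Y) \<longleftrightarrow> r \<in> Y"
    using assms unfolding cf_pi_def by (simp add: mem_cf_lin_single)
qed

lemma list_update_neg_nth_twice:
  "i < length (e :: int list) \<Longrightarrow> (e[i := - (e ! i)])[i := - ((e[i := - (e ! i)]) ! i)] = e"
  by simp

lemma list_update_neg_nth_eq_iff:
  "((e :: int list)[i := - (e ! i)] = z \<and> i < length e) \<longleftrightarrow> (z[i := - (z ! i)] = e \<and> i < length z)"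
  by (metis list_update_neg_nth_twice length_list_update)

lemma mem_cf_dtilde:
  assumes "finite A"
  shows "z \<in> cf_dtilde A \<longleftrightarrow> odd (card {i. i < length z \<and> z[i := - (z ! i)] \<in> A})"
proof -
  let ?F = "\<lambda>e. {i. i < length z \<and> z[i := - (z ! i)] = e}"
  have "count_list (map (\<lambda>i. e[i := - (e ! i)]) [0..<length e]) z = card (?F e)" for e
  proof -
    have "count_list (map (\<lambda>i. e[i := - (e ! i)]) [0..<length e]) z
        = card {i. i < length e \<and> z = e[i := - (e ! i)]}"
      unfolding count_list_eq_length_filter length_filter_conv_card
      by (intro arg_cong[where f = card]) auto
    also have "{i. i < length e \<and> z = e[i := - (e ! i)]} = ?F e"
    proof (rule Collect_cong)
      fix i
      show "(i < length e \<and> z = e[i := - (e ! i)]) = (i < length z \<and> z[i := - (z ! i)] = e)"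
        using list_update_neg_nth_eq_iff[of e i z] by auto
    qed
    finally show ?thesis .
  qed
  moreover have "(\<Sum>e\<in>A. card (?F e)) = card (\<Union> (?F ` A))"
    using assms by (intro card_UN_disjoint[symmetric]) auto
  moreover have "\<Union> (?F ` A) = {i. i < length z \<and> z[i := - (z ! i)] \<in> A}"
    by auto
  ultimately show ?thesis
    unfolding cf_dtilde_def cf_lin_def by simp
qed

lemma cf_eta_cf_add: "finite A \<Longrightarrow> finite B \<Longrightarrow> cf_eta (cf_add A B) = cf_add (cf_eta A) (cf_eta B)"
  unfolding cf_eta_def by (rule cf_lin_cf_add)

lemma cf_dtilde_cf_add:
  "finite A \<Longrightarrow> finite B \<Longrightarrow> cf_dtilde (cf_add A B) = cf_add (cf_dtilde A) (cf_dtilde B)"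
  unfolding cf_dtilde_def by (rule cf_lin_cf_add)

lemma cf_pi_cf_add: "finite A \<Longrightarrow> finite B \<Longrightarrow> cf_pi (cf_add A B) = cf_add (cf_pi A) (cf_pi B)"
  unfolding cf_pi_def by (rule cf_lin_cf_add)

lemma finite_cf_basis: "finite (cf_basis m)"
proof -
  have "cf_basis m = {e. set e \<subseteq> {1, -1} \<and> length e = 2 * m - 1}"
    unfolding cf_basis_def by auto
  then show ?thesis
    by (simp add: finite_lists_length_eq)
qed

lemma finite_CF: "A \<in> CF m \<Longrightarrow> finite A"
  unfolding CF_def using finite_cf_basis by (auto intro: finite_subset)

lemma cf_add_CF: "A \<in> CF m \<Longrightarrow> B \<in> CF m \<Longrightarrow> cf_add A B \<in> CF m"
  unfolding CF_def cf_add_def by auto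

lemma cf_eta_CF:
  assumes "A \<in> CF m"
  shows "cf_eta A \<in> CF m"
  unfolding CF_def
proof (intro PowI subsetI)
  fix z
  assume "z \<in> cf_eta A"
  then have "map uminus z \<in> cf_basis m"
    using assms by (auto simp: CF_def mem_cf_eta finite_CF)
  then have "length z = 2 * m - 1" "uminus ` set z \<subseteq> {1, -1}"
    by (simp_all add: cf_basis_def)
  moreover have "set z \<subseteq> {1, -1}"
  proof
    fix c
    assume "c \<in> set z"
    then have "- c \<in> {1, -1}"
      using calculation(2) by blast
    then show "c \<in> {1, -1}"
      by auto
  qed
  ultimately show "z \<in> cf_basis m"
    by (simp add: cf_basis_def)
qed

lemma list_update_neg_nth_in_cf_basis:
  assumes "e \<in> cf_basis m" "i < length e"
  shows "e[i := - (e ! i)] \<in> cf_basis m"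
proof -
  have "set e \<subseteq> {1, -1}" "length e = 2 * m - 1"
    using assms(1) by (simp_all add: cf_basis_def)
  moreover have "- (e ! i) \<in> {1, -1}"
    using nth_mem[OF assms(2)] calculation(1) by auto
  ultimately show ?thesis
    using set_update_subset_insert[of e i "- (e ! i)"] by (auto simp: cf_basis_def)
qed

lemma cf_dtilde_CF:
  assumes "A \<in> CF m"
  shows "cf_dtilde A \<in> CF m"
  unfolding CF_def
proof (intro PowI subsetI)
  fix z
  assume "z \<in> cf_dtilde A"
  then have "odd (card {i. i < length z \<and> z[i := - (z ! i)] \<in> A})"
    using finite_CF[OF assms] by (simp add: mem_cf_dtilde)
  then have "{i. i < length z \<and> z[i := - (z ! i)] \<in> A} \<noteq> {}"
    by (metis card.empty even_zero)
  then obtain i where i: "i < length z" "z[i := - (z ! i)] \<in> cf_basis m"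
    using assms by (auto simp: CF_def)
  have "(z[i := - (z ! i)])[i := - ((z[i := - (z ! i)]) ! i)] \<in> cf_basis m"
    by (rule list_update_neg_nth_in_cf_basis[OF i(2)]) (simp add: i(1))
  then show "z \<in> cf_basis m"
    by (simp only: list_update_neg_nth_twice[OF i(1)])
qed

lemma cf_d_CF: "A \<in> CF m \<Longrightarrow> cf_d A \<in> CF m"
  unfolding cf_d_def by (intro cf_add_CF cf_dtilde_CF cf_eta_CF)

lemma mem_cf_slice [simp]: "r \<in> cf_slice a b X \<longleftrightarrow> a # b # r \<in> X"
  by (simp add: cf_slice_def)

lemma finite_cf_slice [simp]: "finite X \<Longrightarrow> finite (cf_slice a b X)"
  unfolding cf_slice_def by (rule finite_vimageI[where h = "\<lambda>r. a # b # r", unfolded vimage_def]) (auto intro: injI)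

lemma cf_slice_empty [simp]: "cf_slice a b {} = {}"
  by (simp add: cf_slice_def)

lemma cf_slice_cf_add [simp]: "cf_slice a b (cf_add A B) = cf_add (cf_slice a b A) (cf_slice a b B)"
  by (simp add: set_eq_iff)

lemma cf_slice_cf_prefix [simp]:
  "finite Y \<Longrightarrow> cf_slice a b (cf_prefix c d Y) = (if a = c \<and> b = d then Y else {})"
  by (auto simp: mem_cf_prefix)

lemma cf_basis_Suc_Cons_Cons:
  assumes "n \<ge> 1"
  shows "a # b # r \<in> cf_basis (Suc n) \<longleftrightarrow> a \<in> {1, -1} \<and> b \<in> {1, -1} \<and> r \<in> cf_basis n"
  using assms by (auto simp: cf_basis_def)

lemma cf_basis_SucE:
  assumes "n \<ge> 1" "z \<in> cf_basis (n + 1)"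
  obtains a b r where "z = a # b # r" "a \<in> {1, -1}" "b \<in> {1, -1}"
proof -
  have "length z \<ge> 2"
    using assms by (simp add: cf_basis_def)
  then obtain a b r where "z = a # b # r"
    by (metis Suc_le_length_iff numeral_2_eq_2)
  with assms that show ?thesis
    by (simp add: cf_basis_Suc_Cons_Cons)
qed

lemma cf_slice_CF: "n \<ge> 1 \<Longrightarrow> A \<in> CF (n + 1) \<Longrightarrow> cf_slice a b A \<in> CF n"
  by (auto simp: CF_def cf_basis_Suc_Cons_Cons)

lemma cf_prefix_CF:
  assumes "n \<ge> 1" "a \<in> {1, -1}" "b \<in> {1, -1}" "Y \<in> CF n"
  shows "cf_prefix a b Y \<in> CF (n + 1)"
  using assms finite_CF[OF assms(4)] by (fastforce simp: CF_def mem_cf_prefix cf_basis_Suc_Cons_Cons)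

lemma CF_eq_iff_slices:
  assumes "n \<ge> 1" "A \<in> CF (n + 1)" "B \<in> CF (n + 1)"
  shows "A = B \<longleftrightarrow> (\<forall>a\<in>{1, -1}. \<forall>b\<in>{1, -1}. cf_slice a b A = cf_slice a b B)"
proof
  assume slices: "\<forall>a\<in>{1, -1}. \<forall>b\<in>{1, -1}. cf_slice a b A = cf_slice a b B"
  show "A = B"
  proof (rule set_eqI)
    fix z
    show "z \<in> A \<longleftrightarrow> z \<in> B"
    proof (cases "z \<in> cf_basis (n + 1)")
      case True
      obtain a b r where "z = a # b # r" "a \<in> {1, -1}" "b \<in> {1, -1}"
        using assms(1) True by (rule cf_basis_SucE)
      then show ?thesis
        using slices by (auto simp: set_eq_iff)
    next
      case False
      then show ?thesis
        using assms(2,3) by (auto simp: CF_def)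
    qed
  qed
qed simp

lemma card_less_Suc_split:
  "card {i. i < Suc m \<and> P i} = card {i. i < m \<and> P (Suc i)} + (if P 0 then 1 else 0)"
proof -
  have "{i. i < Suc m \<and> P i} = (if P 0 then {0} else {}) \<union> Suc ` {i. i < m \<and> P (Suc i)}"
    by (auto simp: less_Suc_eq_0_disj)
  then show ?thesis
    by (auto simp: card_image)
qed

lemma cf_slice_cf_dtilde:
  assumes "finite A"
  shows "cf_slice a b (cf_dtilde A)
    = cf_add (cf_add (cf_slice (-a) b A) (cf_slice a (-b) A)) (cf_dtilde (cf_slice a b A))"
proof (rule set_eqI)
  fix r
  have "card {i. i < length (a # b # r) \<and> (a # b # r)[i := - ((a # b # r) ! i)] \<in> A}
     = card {i. i < length r \<and> r[i := - (r ! i)] \<in> cf_slice a b A}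
       + (if a # (-b) # r \<in> A then 1 else 0) + (if (-a) # b # r \<in> A then 1 else 0)"
    by (simp add: card_less_Suc_split)
  then show "r \<in> cf_slice a b (cf_dtilde A) \<longleftrightarrow>
      r \<in> cf_add (cf_add (cf_slice (-a) b A) (cf_slice a (-b) A)) (cf_dtilde (cf_slice a b A))"
    using assms by (simp add: mem_cf_dtilde)
qed

lemma cf_slice_cf_eta: "finite A \<Longrightarrow> cf_slice a b (cf_eta A) = cf_eta (cf_slice (-a) (-b) A)"
  by (simp add: set_eq_iff mem_cf_eta)

lemma cf_slice_cf_d:
  "finite A \<Longrightarrow> cf_slice a b (cf_d A)
    = cf_add (cf_add (cf_add (cf_slice (-a) b A) (cf_slice a (-b) A)) (cf_dtilde (cf_slice a b A)))
        (cf_eta (cf_slice (-a) (-b) A))"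
  by (simp add: cf_d_def cf_slice_cf_dtilde cf_slice_cf_eta)

lemma CF_eq_sum_prefix_slices:
  assumes "n \<ge> 1" "A \<in> CF (n + 1)"
  shows "A = cf_add (cf_add (cf_add (cf_prefix 1 1 (cf_slice 1 1 A)) (cf_prefix 1 (-1) (cf_slice 1 (-1) A)))
      (cf_prefix (-1) 1 (cf_slice (-1) 1 A))) (cf_prefix (-1) (-1) (cf_slice (-1) (-1) A))"
proof -
  have "cf_slice a b A \<in> CF n" for a b
    using assms by (rule cf_slice_CF)
  then have "cf_prefix a b (cf_slice c d A) \<in> CF (n + 1)" if "a \<in> {1, -1}" "b \<in> {1, -1}" for a b c d
    using assms(1) that by (intro cf_prefix_CF)
  then show ?thesis
    using assms finite_CF[OF assms(2)]
    by (subst CF_eq_iff_slices[OF assms(1)]) (auto intro!: cf_add_CF)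
qed

lemma cf_pi_eq_sum_slices:
  assumes "n \<ge> 1" "A \<in> CF (n + 1)"
  shows "cf_pi A = cf_add (cf_add (cf_add (cf_slice 1 1 A) (cf_slice 1 (-1) A)) (cf_slice (-1) 1 A))
      (cf_slice (-1) (-1) A)"
  using finite_CF[OF assms(2)]
  by (subst CF_eq_sum_prefix_slices[OF assms]) (simp add: cf_pi_cf_add cf_pi_cf_prefix)

lemma cf_slice_cf_decomp:
  assumes "finite u" "finite v" "finite w" "finite t"
  shows "cf_slice 1 1 (cf_decomp u v w t) = cf_add (cf_add u w) t"
    and "cf_slice 1 (-1) (cf_decomp u v w t) = v"
    and "cf_slice (-1) 1 (cf_decomp u v w t) = cf_add v w"
    and "cf_slice (-1) (-1) (cf_decomp u v w t) = u"
  using assms by (auto simp: cf_decomp_def set_eq_iff)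

lemma cf_decomp_CF:
  assumes "n \<ge> 1" "u \<in> CF n" "v \<in> CF n" "w \<in> CF n" "t \<in> CF n"
  shows "cf_decomp u v w t \<in> CF (n + 1)"
  unfolding cf_decomp_def using assms by (intro cf_add_CF cf_prefix_CF) auto

lemma cf_decomp_inject:
  assumes "finite u" "finite v" "finite w" "finite t" "finite u'" "finite v'" "finite w'" "finite t'"
    and "cf_decomp u v w t = cf_decomp u' v' w' t'"
  shows "u = u' \<and> v = v' \<and> w = w' \<and> t = t'"
proof -
  have "cf_slice a b (cf_decomp u v w t) = cf_slice a b (cf_decomp u' v' w' t')" for a b
    using assms(9) by simp
  then show ?thesis
    using cf_slice_cf_decomp[OF assms(1-4)] cf_slice_cf_decomp[OF assms(5-8)]
    by (auto simp: set_eq_iff)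
qed

lemma CF_eq_cf_decomp_slices:
  assumes "n \<ge> 1" "x \<in> CF (n + 1)"
  shows "x = cf_decomp (cf_slice (-1) (-1) x) (cf_slice 1 (-1) x)
      (cf_add (cf_slice (-1) 1 x) (cf_slice 1 (-1) x)) (cf_pi x)"
    (is "x = cf_decomp ?u ?v ?w ?t")
proof -
  have "cf_slice a b x \<in> CF n" for a b
    using assms by (rule cf_slice_CF)
  then have CFs: "?u \<in> CF n" "?v \<in> CF n" "?w \<in> CF n" "?t \<in> CF n"
    unfolding cf_pi_eq_sum_slices[OF assms] by (auto intro!: cf_add_CF)
  note decomp_slices = cf_slice_cf_decomp[OF CFs[THEN finite_CF]]
  have decomp_CF: "cf_decomp ?u ?v ?w ?t \<in> CF (n + 1)"
    using assms(1) CFs by (rule cf_decomp_CF)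
  show ?thesis
  proof (rule iffD2[OF CF_eq_iff_slices[OF assms decomp_CF]])
    show "\<forall>a\<in>{1, -1}. \<forall>b\<in>{1, -1}. cf_slice a b x = cf_slice a b (cf_decomp ?u ?v ?w ?t)"
      using decomp_slices unfolding cf_pi_eq_sum_slices[OF assms]
      by (auto simp: set_eq_iff; argo)
  qed
qed

lemma cf_d_cf_decomp_eq_empty_iff:
  assumes "n \<ge> 1" "u \<in> CF n" "v \<in> CF n" "w \<in> CF n" "t \<in> cf_ker n"
  shows "cf_d (cf_decomp u v w t) = {} \<longleftrightarrow>
    cf_d v = cf_add (cf_add w t) (cf_eta w)
    \<and> cf_d u = cf_add (cf_add w (cf_eta t)) (cf_eta w)
    \<and> cf_d w = {}"
proof -
  let ?x = "cf_decomp u v w t"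
  let ?S = "\<lambda>a b. cf_slice a b (cf_d ?x)"
  have t: "t \<in> CF n" "cf_d t = {}"
    using assms(5) by (simp_all add: cf_ker_def)
  have fin: "finite u" "finite v" "finite w" "finite t"
    using assms(2-4) t(1) by (simp_all add: finite_CF)
  have x_CF: "?x \<in> CF (n + 1)"
    using assms(1-4) t(1) by (rule cf_decomp_CF)
  have pointwise:
    "(r \<notin> ?S 1 1 \<and> r \<notin> ?S 1 (-1) \<and> r \<notin> ?S (-1) 1 \<and> r \<notin> ?S (-1) (-1)) \<longleftrightarrow>
      (r \<in> cf_d v \<longleftrightarrow> r \<in> cf_add (cf_add w t) (cf_eta w))
      \<and> (r \<in> cf_d u \<longleftrightarrow> r \<in> cf_add (cf_add w (cf_eta t)) (cf_eta w))
      \<and> r \<notin> cf_d w" for r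
  proof -
    have dtilde_t_eq_eta_t: "r \<in> cf_dtilde t \<longleftrightarrow> r \<in> cf_eta t"
      using t(2) by (auto simp: cf_d_def set_eq_iff)
    show ?thesis
      unfolding cf_slice_cf_d[OF finite_CF[OF x_CF]]
      using fin dtilde_t_eq_eta_t
      by (simp add: cf_slice_cf_decomp cf_dtilde_cf_add cf_eta_cf_add cf_d_def del: mem_cf_slice)
        argo
  qed
  have "cf_d ?x = {} \<longleftrightarrow> (\<forall>a\<in>{1, -1}. \<forall>b\<in>{1, -1}. ?S a b = {})"
    using CF_eq_iff_slices[OF assms(1) cf_d_CF[OF x_CF], of "{}"] by (simp add: CF_def)
  also have "\<dots> \<longleftrightarrow> (\<forall>r. r \<notin> ?S 1 1 \<and> r \<notin> ?S 1 (-1) \<and> r \<notin> ?S (-1) 1 \<and> r \<notin> ?S (-1) (-1))"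
    by (auto simp del: mem_cf_slice)
  also have "\<dots> \<longleftrightarrow> cf_d v = cf_add (cf_add w t) (cf_eta w)
      \<and> cf_d u = cf_add (cf_add w (cf_eta t)) (cf_eta w) \<and> cf_d w = {}"
    by (simp only: pointwise all_conj_distrib set_eq_iff empty_iff simp_thms)
  finally show ?thesis .
qed

lemma ex1_cf_decomp:
  assumes "n \<ge> 1" "x \<in> CF (n + 1)" "cf_pi x \<in> cf_ker n"
  shows "\<exists>!p. (\<lambda>(u, v, w, t). u \<in> CF n \<and> v \<in> CF n \<and> w \<in> CF n \<and> t \<in> cf_ker n
                     \<and> x = cf_decomp u v w t) p"
    (is "\<exists>!p. ?P p")
proof -
  define u where "u = cf_slice (-1) (-1) x"
  define v where "v = cf_slice 1 (-1) x"
  define w where "w = cf_add (cf_slice (-1) 1 x) (cf_slice 1 (-1) x)"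
  define t where "t = cf_pi x"
  have "u \<in> CF n" "v \<in> CF n" "w \<in> CF n"
    unfolding u_def v_def w_def using cf_slice_CF[OF assms(1,2)] by (simp_all add: cf_add_CF)
  moreover have "t \<in> cf_ker n"
    using assms(3) by (simp add: t_def)
  moreover have "x = cf_decomp u v w t"
    unfolding u_def v_def w_def t_def using assms(1,2) by (rule CF_eq_cf_decomp_slices)
  ultimately have exists: "?P (u, v, w, t)"
    by simp
  have unique: "p = (u, v, w, t)" if "?P p" for p
  proof -
    obtain u' v' w' t' where p: "p = (u', v', w', t')"
      by (cases p)
    have "u' \<in> CF n" "v' \<in> CF n" "w' \<in> CF n" "t' \<in> CF n" "x = cf_decomp u' v' w' t'"
      and "u \<in> CF n" "v \<in> CF n" "w \<in> CF n" "t \<in> CF n" "x = cf_decomp u v w t"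
      using exists that unfolding p prod.case cf_ker_def mem_Collect_eq by blast+
    then show ?thesis
      unfolding p using cf_decomp_inject[of u' v' w' t' u v w t] finite_CF by blast
  qed
  show ?thesis
    using exists unique by (rule ex1I)
qed

theorem lemma4p3:
  fixes n :: nat and x :: "int list set"
  assumes "n \<ge> 1"
    and "x \<in> CF (n + 1)"
    and "cf_pi x \<in> cf_ker n"
  shows "(\<exists>!p. (\<lambda>(u, v, w, t). u \<in> CF n \<and> v \<in> CF n \<and> w \<in> CF n \<and> t \<in> cf_ker n
                     \<and> x = cf_decomp u v w t) p)
       \<and> (\<forall>u v w t. u \<in> CF n \<and> v \<in> CF n \<and> w \<in> CF n \<and> t \<in> cf_ker n
                     \<and> x = cf_decomp u v w t \<longrightarrow>
             (cf_d x = {} \<longleftrightarrow>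
               (cf_d v = cf_add (cf_add w t) (cf_eta w)
                \<and> cf_d u = cf_add (cf_add w (cf_eta t)) (cf_eta w)
                \<and> cf_d w = {})))"
    (is "?unique_decomposition \<and> ?kernel_iff")
proof
  show ?unique_decomposition
    using assms by (rule ex1_cf_decomp)
  show ?kernel_iff
    by (intro allI impI, elim conjE) (simp add: cf_d_cf_decomp_eq_empty_iff[OF assms(1)])
qed

end
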